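(* Let $I$ be a finite poset whose Hasse digraph $\mathcal H(I)$ is isomorphic to one of the following digraphs $\mathcal F_1,\dots,\mathcal F_7$, where an "edge" means an arrow that may be oriented either way. Then $I$ is indefinite. $\mathcal F_1$: vertices $a_1,a_2,b_1,b_2,c$; arrows $a_1\to b_1,a_1\to b_2,a_2\to b_1,a_2\to b_2$; an edge between $a_2$ and $c$. $\mathcal F_2$: vertices $a_1,a_2,b_1,b_2,c$; arrows $a_1\to b_1,a_1\to b_2,a_2\to b_1,a_2\to b_2$; an edge between $b_2$ and $c$. $\mathcal F_3$: a tree with one vertex of degree $3$ whose three arms contain $4$, $3$ and $1$ vertices, all edges oriented arbitrarily ($9$ vertices). $\mathcal F_4$: a tree with one vertex of degree $3$ whose three arms contain $6$, $2$ and $1$ vertices, all edges oriented arbitrarily ($10$ vertices). $\mathcal F_5$: vertices $x_1,\dots,x_8,u,c$; arrows $x_1\to x_2\to\cdots\to x_8$, $x_1\to u$, $u\to x_8$; an edge between $x_8$ and $c$. $\mathcal F_6$: vertices $x_1,\dots,x_8,u,c$; arrows $x_1\to x_2\to\cdots\to x_8$, $x_1\to u$, $u\to x_8$; an edge between $x_1$ and $c$. $\mathcal F_7$: vertices $x_1,\dots,x_8,u_1,u_2$; arrows $x_1\to x_2\to\cdots\to x_8$, $x_1\to u_1\to u_2\to x_8$.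
   Context: For a finite poset $I$ on $\{1,\dots,n\}$: $C_I=[c_{ij}]$ with $c_{ij}=1$ iff $i\preceq_I j$ (else $0$), $G_I=\tfrac12(C_I+C_I^{tr})$; $I$ is indefinite if $G_I$ is neither positive nor negative semi-definite. The Hasse digraph $\mathcal H(I)$ has an arrow $i\to j$ iff $i\prec_I j$ and there is no $k$ with $i\prec_I k\prec_I j$. *)

theory Defs
  imports Complex_Main
begin

text \<open>A finite poset I on {1..n} is a relation r with partial_order_on {1..n} r;
  (i,j) \<in> r means i \<preceq>_I j.\<close>

definition incidence_matrix :: "(nat \<times> nat) set \<Rightarrow> nat \<Rightarrow> nat \<Rightarrow> real" where
  "incidence_matrix r i j = (if (i, j) \<in> r then 1 else 0)"

definition sym_gram :: "(nat \<times> nat) set \<Rightarrow> nat \<Rightarrow> nat \<Rightarrow> real" where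
  "sym_gram r i j = (incidence_matrix r i j + incidence_matrix r j i) / 2"

definition quad_form :: "nat \<Rightarrow> (nat \<Rightarrow> nat \<Rightarrow> real) \<Rightarrow> (nat \<Rightarrow> real) \<Rightarrow> real" where
  "quad_form n M x = (\<Sum>i=1..n. \<Sum>j=1..n. x i * M i j * x j)"

definition pos_semidef :: "nat \<Rightarrow> (nat \<Rightarrow> nat \<Rightarrow> real) \<Rightarrow> bool" where
  "pos_semidef n M \<longleftrightarrow> (\<forall>x. quad_form n M x \<ge> 0)"

definition neg_semidef :: "nat \<Rightarrow> (nat \<Rightarrow> nat \<Rightarrow> real) \<Rightarrow> bool" where
  "neg_semidef n M \<longleftrightarrow> (\<forall>x. quad_form n M x \<le> 0)"

definition indefinite_poset :: "nat \<Rightarrow> (nat \<times> nat) set \<Rightarrow> bool" where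
  "indefinite_poset n r \<longleftrightarrow> \<not> pos_semidef n (sym_gram r) \<and> \<not> neg_semidef n (sym_gram r)"

type_synonym digraph = "nat set \<times> (nat \<times> nat) set"

definition hasse :: "nat \<Rightarrow> (nat \<times> nat) set \<Rightarrow> digraph" where
  "hasse n r = ({1..n},
     {(i, j). i \<in> {1..n} \<and> j \<in> {1..n} \<and> (i, j) \<in> r \<and> i \<noteq> j \<and>
        \<not> (\<exists>k \<in> {1..n}. (i, k) \<in> r \<and> i \<noteq> k \<and> (k, j) \<in> r \<and> k \<noteq> j)})"

definition digraph_iso :: "digraph \<Rightarrow> digraph \<Rightarrow> bool" where
  "digraph_iso D D' \<longleftrightarrow> (\<exists>f. bij_betw f (fst D) (fst D') \<and>
     (\<forall>u \<in> fst D. \<forall>v \<in> fst D. (u, v) \<in> snd D \<longleftrightarrow> (f u, f v) \<in> snd D'))"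

definition orient :: "bool \<Rightarrow> nat \<times> nat \<Rightarrow> nat \<times> nat" where
  "orient b e = (if b then e else (snd e, fst e))"

definition oriented_edges :: "(nat \<Rightarrow> bool) \<Rightarrow> (nat \<times> nat) list \<Rightarrow> (nat \<times> nat) set" where
  "oriented_edges \<sigma> es = {orient (\<sigma> k) (es ! k) | k. k < length es}"

text \<open>F1, F2: a1=0, a2=1, b1=2, b2=3, c=4.\<close>
definition F1 :: "bool \<Rightarrow> digraph" where
  "F1 b = ({0..4}, {(0,2),(0,3),(1,2),(1,3), orient b (1,4)})"

definition F2 :: "bool \<Rightarrow> digraph" where
  "F2 b = ({0..4}, {(0,2),(0,3),(1,2),(1,3), orient b (3,4)})"

text \<open>F3: centre 0, arms 1-2-3-4, 5-6-7, 8 (9 vertices).\<close>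
definition F3 :: "(nat \<Rightarrow> bool) \<Rightarrow> digraph" where
  "F3 \<sigma> = ({0..8}, oriented_edges \<sigma>
     [(0,1),(1,2),(2,3),(3,4),(0,5),(5,6),(6,7),(0,8)])"

text \<open>F4: centre 0, arms 1-2-3-4-5-6, 7-8, 9 (10 vertices).\<close>
definition F4 :: "(nat \<Rightarrow> bool) \<Rightarrow> digraph" where
  "F4 \<sigma> = ({0..9}, oriented_edges \<sigma>
     [(0,1),(1,2),(2,3),(3,4),(4,5),(5,6),(0,7),(7,8),(0,9)])"

text \<open>F5, F6, F7: x1..x8 = 0..7; F5/F6: u = 8, c = 9; F7: u1 = 8, u2 = 9.\<close>
definition chain8 :: "(nat \<times> nat) set" where
  "chain8 = {(i, i+1) | i. i < 7}"

definition F5 :: "bool \<Rightarrow> digraph" where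
  "F5 b = ({0..9}, chain8 \<union> {(0,8),(8,7), orient b (7,9)})"

definition F6 :: "bool \<Rightarrow> digraph" where
  "F6 b = ({0..9}, chain8 \<union> {(0,8),(8,7), orient b (0,9)})"

definition F7 :: digraph where
  "F7 = ({0..9}, chain8 \<union> {(0,8),(8,9),(9,7)})"

end

theory Submission
  imports Defs
begin

text \<open>The Hasse digraph determines the poset: \<open>i \<preceq> j\<close> iff \<open>j\<close> is reachable from \<open>i\<close>.
  Hence an isomorphism between the Hasse digraph and a digraph \<open>D\<close> turns \<open>x C\<^sub>I x\<^sup>T\<close> into
  the reachability form of \<open>D\<close>, the sum of \<open>y\<^sub>a y\<^sub>b\<close> over all pairs with \<open>b\<close> reachable from
  \<open>a\<close>. This form is \<open>1\<close> at a unit vector, so the poset is indefinite as soon as the form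
  takes a negative value. For \<open>\<F>\<^sub>1\<close>, \<open>\<F>\<^sub>2\<close>, \<open>\<F>\<^sub>5\<close>, \<open>\<F>\<^sub>6\<close>, \<open>\<F>\<^sub>7\<close> an explicit vector
  does it. In the trees \<open>\<F>\<^sub>3\<close>, \<open>\<F>\<^sub>4\<close>, oriented arbitrarily, two comparable vertices are
  joined by exactly one path, so the reachability matrix has inverse \<open>I - A\<close> (\<open>A\<close> the
  adjacency matrix). Substituting \<open>y = (I - A) z\<close> turns the form into the Tits form
  \<open>\<Sum>\<^sub>a z\<^sub>a\<^sup>2 - \<Sum>\<^sub>a\<^sub>b z\<^sub>a z\<^sub>b\<close> of the underlying tree, which is indefinite for these two
  trees (neither is a Dynkin or an extended Dynkin diagram).\<close>

definition reach_form :: "nat set \<Rightarrow> (nat \<times> nat) set \<Rightarrow> (nat \<Rightarrow> real) \<Rightarrow> real" where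
  "reach_form V E y = (\<Sum>a\<in>V. \<Sum>b\<in>V. if (a, b) \<in> E\<^sup>* then y a * y b else 0)"

lemma rtrancl_hasse_if_le:
  assumes po: "partial_order_on {1..n} r" and ij: "(i, j) \<in> r"
  shows "(i, j) \<in> (snd (hasse n r))\<^sup>*"
proof -
  have r_sub: "r \<subseteq> {1..n} \<times> {1..n}" and "trans r"
    using partial_order_onD[OF po] by auto
  have fin: "finite r"
    using r_sub by (rule finite_subset) simp
  have wf: "wf (r - Id)"
    using fin po by (rule partial_order_on_well_order_on)
  have wf_conv: "wf ((r - Id)\<inverse>)"
    using fin partial_order_on_acyclic[OF po] by (simp add: finite_acyclic_wf_converse)
  from wf ij show ?thesis
  proof (induction j rule: wf_induct_rule)
    case (less j)
    show ?case
    proof (cases "i = j")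
      case False
      let ?K = "{k. (i, k) \<in> r \<and> (k, j) \<in> r - Id}"
      have "i \<in> {1..n}"
        using less.prems r_sub by auto
      then have "i \<in> ?K"
        using less.prems False partial_order_onD(1)[OF po] by (simp add: refl_on_def)
      txt \<open>A maximal element of \<open>?K\<close> is covered by \<open>j\<close>.\<close>
      then obtain k where k: "k \<in> ?K" and k_max: "\<And>m. (m, k) \<in> (r - Id)\<inverse> \<Longrightarrow> m \<notin> ?K"
        by (rule wfE_min[OF wf_conv]) blast
      have no_between: "\<not> ((k, m) \<in> r \<and> k \<noteq> m \<and> (m, j) \<in> r \<and> m \<noteq> j)" for m
      proof
        assume m: "(k, m) \<in> r \<and> k \<noteq> m \<and> (m, j) \<in> r \<and> m \<noteq> j"
        then have "m \<in> ?K"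
          using k \<open>trans r\<close> by (blast dest: transD)
        with m k_max show False by blast
      qed
      have "k \<in> {1..n}" "j \<in> {1..n}"
        using k r_sub by auto
      then have "(k, j) \<in> snd (hasse n r)"
        using k no_between by (simp add: hasse_def)
      moreover have "(i, k) \<in> (snd (hasse n r))\<^sup>*"
        using k less.IH by blast
      ultimately show ?thesis
        by (rule rtrancl_into_rtrancl[rotated])
    qed simp
  qed
qed

lemma rtrancl_hasse_iff:
  assumes po: "partial_order_on {1..n} r" and i: "i \<in> {1..n}"
  shows "(i, j) \<in> (snd (hasse n r))\<^sup>* \<longleftrightarrow> (i, j) \<in> r"
proof
  assume "(i, j) \<in> (snd (hasse n r))\<^sup>*"
  then show "(i, j) \<in> r"
  proof (induction rule: rtrancl_induct)
    case base
    show ?case using i partial_order_onD(1)[OF po] by (simp add: refl_on_def)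
  next
    case (step j k)
    then show ?case using partial_order_onD(2)[OF po] by (auto simp: hasse_def dest: transD)
  qed
qed (rule rtrancl_hasse_if_le[OF po])

lemma rtrancl_map:
  assumes "\<And>u v. (u, v) \<in> E \<Longrightarrow> (f u, f v) \<in> H" and "(a, b) \<in> E\<^sup>*"
  shows "(f a, f b) \<in> H\<^sup>*"
  using assms(2) by induction (auto intro: rtrancl_into_rtrancl assms(1))

lemma trancl_map:
  assumes "\<And>u v. (u, v) \<in> E \<Longrightarrow> (f u, f v) \<in> H" and "(a, b) \<in> E\<^sup>+"
  shows "(f a, f b) \<in> H\<^sup>+"
  using assms(2) by induction (auto intro: trancl_into_trancl assms(1))

lemma digraph_iso_hasse_rtrancl:
  assumes po: "partial_order_on {1..n} r" and iso: "digraph_iso (V, E) (hasse n r)"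
    and E: "E \<subseteq> V \<times> V"
  obtains f where "bij_betw f V {1..n}"
    and "\<And>a b. a \<in> V \<Longrightarrow> b \<in> V \<Longrightarrow> (f a, f b) \<in> r \<longleftrightarrow> (a, b) \<in> E\<^sup>*"
proof -
  let ?H = "snd (hasse n r)"
  obtain f where bij: "bij_betw f V {1..n}"
    and arrow: "\<forall>u\<in>V. \<forall>v\<in>V. (u, v) \<in> E \<longleftrightarrow> (f u, f v) \<in> ?H"
    using iso unfolding digraph_iso_def by (auto simp: hasse_def)
  let ?g = "inv_into V f"
  have to_H: "(f u, f v) \<in> ?H" if "(u, v) \<in> E" for u v
    using that E arrow by blast
  have to_E: "(?g i, ?g j) \<in> E" if "(i, j) \<in> ?H" for i j
  proof -
    have "i \<in> {1..n}" "j \<in> {1..n}"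
      using that by (auto simp: hasse_def)
    then have "f (?g i) = i" "f (?g j) = j" "?g i \<in> V" "?g j \<in> V"
      using bij by (auto simp: bij_betw_inv_into_right bij_betw_def inv_into_into)
    then show ?thesis
      using arrow[rule_format, of "?g i" "?g j"] that by simp
  qed
  show ?thesis
  proof (rule that[OF bij])
    fix a b assume ab: "a \<in> V" "b \<in> V"
    have fa: "f a \<in> {1..n}" using ab bij by (auto simp: bij_betw_def)
    have "(f a, f b) \<in> r \<longleftrightarrow> (f a, f b) \<in> ?H\<^sup>*"
      using rtrancl_hasse_iff[OF po fa] by simp
    also have "\<dots> \<longleftrightarrow> (a, b) \<in> E\<^sup>*"
    proof
      assume "(f a, f b) \<in> ?H\<^sup>*"
      from rtrancl_map[where f = ?g, OF to_E this] show "(a, b) \<in> E\<^sup>*"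
        using ab bij by (simp add: bij_betw_inv_into_left)
    qed (rule rtrancl_map[where f = f, OF to_H])
    finally show "(f a, f b) \<in> r \<longleftrightarrow> (a, b) \<in> E\<^sup>*" .
  qed
qed

lemma acyclic_if_digraph_iso_hasse:
  assumes po: "partial_order_on {1..n} r" and iso: "digraph_iso (V, E) (hasse n r)"
    and E: "E \<subseteq> V \<times> V"
  shows "acyclic E"
proof (rule acyclicI, intro allI notI)
  fix x assume "(x, x) \<in> E\<^sup>+"
  let ?H = "snd (hasse n r)"
  obtain f where arrow: "\<forall>u\<in>V. \<forall>v\<in>V. (u, v) \<in> E \<longleftrightarrow> (f u, f v) \<in> ?H"
    using iso unfolding digraph_iso_def by (auto simp: hasse_def)
  have "acyclic ?H"
    using partial_order_on_acyclic[OF po] by (rule acyclic_subset) (auto simp: hasse_def)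
  have to_H: "(f u, f v) \<in> ?H" if "(u, v) \<in> E" for u v
    using that E arrow by blast
  from \<open>(x, x) \<in> E\<^sup>+\<close> have "(f x, f x) \<in> ?H\<^sup>+"
    using trancl_map[where f = f, OF to_H] by blast
  with \<open>acyclic ?H\<close> show False
    by (simp add: acyclic_def)
qed

lemma quad_form_sym_gram:
  "quad_form n (sym_gram r) x = (\<Sum>i=1..n. \<Sum>j=1..n. if (i, j) \<in> r then x i * x j else 0)"
proof -
  let ?S = "\<lambda>r. \<Sum>i=1..n. \<Sum>j=1..n. if (i, j) \<in> r then x i * x j else 0"
  have "x i * sym_gram r i j * x j =
      ((if (i, j) \<in> r then x i * x j else 0) + (if (i, j) \<in> r\<inverse> then x i * x j else 0)) / 2" for i j
    by (simp add: sym_gram_def incidence_matrix_def)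
  then have "quad_form n (sym_gram r) x = (?S r + ?S (r\<inverse>)) / 2"
    unfolding quad_form_def by (simp only: sum_divide_distrib[symmetric] sum.distrib)
  moreover have "?S (r\<inverse>) = ?S r"
    by (subst sum.swap) (intro sum.cong refl, simp add: mult.commute)
  ultimately show ?thesis
    by simp
qed

lemma quad_form_sym_gram_reindex:
  assumes bij: "bij_betw f V {1..n}"
    and rel: "\<And>a b. a \<in> V \<Longrightarrow> b \<in> V \<Longrightarrow> (f a, f b) \<in> r \<longleftrightarrow> (a, b) \<in> E\<^sup>*"
  shows "quad_form n (sym_gram r) (y \<circ> inv_into V f) = reach_form V E y"
proof -
  let ?g = "inv_into V f"
  have "quad_form n (sym_gram r) (y \<circ> ?g) =
      (\<Sum>a\<in>V. \<Sum>b\<in>V. if (f a, f b) \<in> r then (y \<circ> ?g) (f a) * (y \<circ> ?g) (f b) else 0)"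
    unfolding quad_form_sym_gram sum.reindex_bij_betw[OF bij, symmetric] by (rule refl)
  also have "\<dots> = reach_form V E y"
    unfolding reach_form_def using bij rel by (intro sum.cong refl) (simp add: bij_betw_inv_into_left)
  finally show ?thesis .
qed

lemma quad_form_unit_vector:
  assumes "0 < n"
  shows "quad_form n M (\<lambda>i. if i = 1 then 1 else 0) = M 1 1"
proof -
  have "(if i = 1 then 1 else 0) * M i j * (if j = 1 then 1 else 0) =
      (if j = 1 then if i = 1 then M 1 1 else 0 else 0)" for i j :: nat
    by simp
  then show ?thesis
    unfolding quad_form_def using assms by (simp add: sum.delta)
qed

lemma not_neg_semidef_sym_gram:
  assumes po: "partial_order_on {1..n} r" and n: "0 < n"
  shows "\<not> neg_semidef n (sym_gram r)"
proof -
  have "(1, 1) \<in> r"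
    using partial_order_onD(1)[OF po] n by (simp add: refl_on_def)
  have "quad_form n (sym_gram r) (\<lambda>i. if i = 1 then 1 else 0) = sym_gram r 1 1"
    by (rule quad_form_unit_vector[OF n])
  also have "\<dots> = 1"
    using \<open>(1, 1) \<in> r\<close> by (simp add: sym_gram_def incidence_matrix_def)
  finally have "quad_form n (sym_gram r) (\<lambda>i. if i = 1 then 1 else 0) = 1" .
  then show ?thesis
    unfolding neg_semidef_def by (metis not_one_le_zero)
qed

lemma indefinite_poset_if_reach_form_neg:
  assumes po: "partial_order_on {1..n} r" and iso: "digraph_iso (V, E) (hasse n r)"
    and E: "E \<subseteq> V \<times> V" and y: "reach_form V E y < 0"
  shows "indefinite_poset n r"
proof -
  obtain f where bij: "bij_betw f V {1..n}"
    and rel: "\<And>a b. a \<in> V \<Longrightarrow> b \<in> V \<Longrightarrow> (f a, f b) \<in> r \<longleftrightarrow> (a, b) \<in> E\<^sup>*"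
    using digraph_iso_hasse_rtrancl[OF po iso E] by blast
  have "V \<noteq> {}"
    using y by (auto simp: reach_form_def)
  then have "0 < n"
    using bij by (auto simp: bij_betw_def)
  have "quad_form n (sym_gram r) (y \<circ> inv_into V f) < 0"
    using y by (simp add: quad_form_sym_gram_reindex[OF bij rel])
  then have "\<not> pos_semidef n (sym_gram r)"
    unfolding pos_semidef_def by (meson not_le)
  with not_neg_semidef_sym_gram[OF po \<open>0 < n\<close>] show ?thesis
    unfolding indefinite_poset_def by simp
qed

lemma sum_reachable_mobius:
  fixes z :: "nat \<Rightarrow> 'a::ab_group_add"
  assumes fin: "finite V" and E: "E \<subseteq> V \<times> V" and acyc: "acyclic E"
    and uniq: "\<And>u b b' c. (u, b) \<in> E\<^sup>* \<Longrightarrow> (u, b') \<in> E\<^sup>* \<Longrightarrow> (b, c) \<in> E \<Longrightarrow> (b', c) \<in> E \<Longrightarrow> b = b'"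
    and a: "a \<in> V"
  shows "(\<Sum>b\<in>E\<^sup>* `` {a}. z b - (\<Sum>c\<in>E `` {b}. z c)) = z a"
proof -
  let ?U = "E\<^sup>* `` {a}"
  let ?P = "Sigma ?U (\<lambda>b. E `` {b})"
  have "?U \<subseteq> V"
    using a trancl_subset_Sigma[OF E] by (auto simp: rtrancl_eq_or_trancl)
  then have finU: "finite ?U" and "finite ?P"
    using fin E by (auto intro: finite_subset)
  have inj: "inj_on snd ?P"
    using uniq by (auto intro!: inj_onI)
  have image: "snd ` ?P = ?U - {a}"
  proof
    show "snd ` ?P \<subseteq> ?U - {a}"
      using acyc by (auto simp: acyclic_def dest: rtrancl_into_trancl1)
    show "?U - {a} \<subseteq> snd ` ?P"
      by (auto simp: rtrancl_eq_or_trancl image_iff dest!: tranclD2)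
  qed
  have "(\<Sum>b\<in>?U. \<Sum>c\<in>E `` {b}. z c) = (\<Sum>p\<in>?P. z (snd p))"
    using finU fin E by (subst sum.Sigma) (auto simp: split_def intro: finite_subset)
  also have "\<dots> = (\<Sum>c\<in>?U - {a}. z c)"
    using sum.reindex[OF inj, of z] by (simp add: image comp_def)
  also have "\<dots> = (\<Sum>b\<in>?U. z b) - z a"
    using finU by (simp add: sum_diff1)
  finally show ?thesis
    by (simp add: sum_subtractf)
qed

lemma reach_form_mobius_substitution:
  fixes z :: "nat \<Rightarrow> real"
  assumes fin: "finite V" and E: "E \<subseteq> V \<times> V" and acyc: "acyclic E"
    and uniq: "\<And>u b b' c. (u, b) \<in> E\<^sup>* \<Longrightarrow> (u, b') \<in> E\<^sup>* \<Longrightarrow> (b, c) \<in> E \<Longrightarrow> (b', c) \<in> E \<Longrightarrow> b = b'"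
  shows "reach_form V E (\<lambda>b. z b - (\<Sum>c\<in>E `` {b}. z c)) =
    (\<Sum>a\<in>V. z a * z a) - (\<Sum>(a, c)\<in>E. z a * z c)"
proof -
  let ?x = "\<lambda>b. z b - (\<Sum>c\<in>E `` {b}. z c)"
  have reach: "{b \<in> V. (a, b) \<in> E\<^sup>*} = E\<^sup>* `` {a}" if "a \<in> V" for a
    using that trancl_subset_Sigma[OF E] by (auto simp: rtrancl_eq_or_trancl)
  have "reach_form V E ?x = (\<Sum>a\<in>V. ?x a * (\<Sum>b\<in>E\<^sup>* `` {a}. ?x b))"
    unfolding reach_form_def using fin
    by (intro sum.cong refl) (simp add: sum_distrib_left sum.inter_filter[symmetric] reach)
  also have "\<dots> = (\<Sum>a\<in>V. ?x a * z a)"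
    using sum_reachable_mobius[where z = z, OF fin E acyc uniq] by simp
  also have "\<dots> = (\<Sum>a\<in>V. z a * z a) - (\<Sum>a\<in>V. \<Sum>c\<in>E `` {a}. z a * z c)"
    by (simp add: algebra_simps sum_subtractf sum_distrib_left)
  also have "(\<Sum>a\<in>V. \<Sum>c\<in>E `` {a}. z a * z c) = (\<Sum>(a, c)\<in>E. z a * z c)"
  proof -
    have "Sigma V (\<lambda>a. E `` {a}) = E"
      using E by auto
    then show ?thesis
      using fin E by (subst sum.Sigma) (auto intro: finite_subset)
  qed
  finally show ?thesis .
qed

lemma parent_forest_separation:
  fixes par :: "nat \<Rightarrow> nat"
  assumes par_le: "\<And>v. par v \<le> v"
    and edge: "\<And>a b. (a, b) \<in> E \<Longrightarrow> a \<noteq> b \<and> (a = par b \<or> b = par a)"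
    and v1: "(v1, w) \<in> E" and v2: "(v2, w) \<in> E" and "v1 \<noteq> v2"
  obtains S where "v1 \<in> S" "v2 \<notin> S" "\<And>a b. (a, b) \<in> E \<Longrightarrow> a \<noteq> w \<Longrightarrow> b \<noteq> w \<Longrightarrow> a \<in> S \<longleftrightarrow> b \<in> S"
proof -
  txt \<open>\<open>S\<close> is the set of descendants of \<open>v\<^sub>1\<close> if \<open>v\<^sub>1\<close> is a child of \<open>w\<close>, and the
    complement of the set of descendants of \<open>w\<close> if \<open>v\<^sub>1\<close> is its parent.\<close>
  define desc where "desc x = {u. \<exists>k. (par ^^ k) u = x}" for x
  have iter_le: "(par ^^ k) u \<le> u" for k u
    by (induction k) (auto intro: order_trans[OF par_le])
  have desc_par: "u \<in> desc x \<longleftrightarrow> par u \<in> desc x" if "u \<noteq> x" for u x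
  proof
    assume "u \<in> desc x"
    then obtain k where k: "(par ^^ k) u = x"
      by (auto simp: desc_def)
    with that obtain j where "k = Suc j"
      by (cases k) auto
    with k show "par u \<in> desc x"
      by (auto simp: desc_def funpow_Suc_right simp del: funpow.simps)
  next
    assume "par u \<in> desc x"
    then obtain k where "(par ^^ k) (par u) = x"
      by (auto simp: desc_def)
    then have "(par ^^ Suc k) u = x"
      by (simp add: funpow_Suc_right del: funpow.simps)
    then show "u \<in> desc x"
      unfolding desc_def by blast
  qed
  have closed: "a \<in> desc x \<longleftrightarrow> b \<in> desc x"
    if "(a, b) \<in> E" "a \<noteq> w" "b \<noteq> w" "x = w \<or> par x = w" for a b x
    using edge[OF that(1)]
  proof (elim conjE disjE)
    assume "a = par b"
    moreover have "b \<noteq> x"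
      using that(2-4) \<open>a = par b\<close> by auto
    ultimately show ?thesis
      using desc_par[of b x] by simp
  next
    assume "b = par a"
    moreover have "a \<noteq> x"
      using that(2-4) \<open>b = par a\<close> by auto
    ultimately show ?thesis
      using desc_par[of a x] by simp
  qed
  consider (child) "w = par v1" | (parent) "v1 = par w"
    using edge[OF v1] by blast
  then show ?thesis
  proof cases
    case child
    have "w < v1"
      using edge[OF v1] par_le[of v1] child by simp
    moreover have "par v2 \<le> w"
      using edge[OF v2] par_le[of v2] par_le[of w] by auto
    ultimately have "(par ^^ k) (par v2) \<noteq> v1" for k
      using iter_le[of k "par v2"] by linarith
    then have "v2 \<notin> desc v1"
      using desc_par[of v2 v1] \<open>v1 \<noteq> v2\<close> by (simp add: desc_def)
    moreover have "v1 \<in> desc v1"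
      by (auto simp: desc_def intro: exI[of _ 0])
    ultimately show ?thesis
      using that[of "desc v1"] closed child by blast
  next
    case parent
    have "v1 < w"
      using edge[OF v1] par_le[of w] parent by simp
    then have "(par ^^ k) v1 \<noteq> w" for k
      using iter_le[of k v1] by linarith
    then have "v1 \<notin> desc w"
      by (simp add: desc_def)
    moreover have "w = par v2"
      using edge[OF v2] parent \<open>v1 \<noteq> v2\<close> by auto
    then have "v2 \<in> desc w"
      by (auto simp: desc_def intro: exI[of _ 1])
    ultimately show ?thesis
      using that[of "- desc w"] closed by blast
  qed
qed

lemma parent_forest_unique_paths:
  fixes par :: "nat \<Rightarrow> nat"
  assumes par_le: "\<And>v. par v \<le> v"
    and edge: "\<And>a b. (a, b) \<in> E \<Longrightarrow> a = par b \<or> b = par a"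
    and acyc: "acyclic E"
    and paths: "(u, b) \<in> E\<^sup>*" "(u, b') \<in> E\<^sup>*" and arrows: "(b, c) \<in> E" "(b', c) \<in> E"
  shows "b = b'"
proof (rule ccontr)
  assume "b \<noteq> b'"
  have "a \<noteq> a' \<and> (a = par a' \<or> a' = par a)" if "(a, a') \<in> E" for a a'
    using acyc edge that by (auto simp: acyclic_def)
  then obtain S where S: "b \<in> S" "b' \<notin> S"
    and sep: "\<And>a a'. (a, a') \<in> E \<Longrightarrow> a \<noteq> c \<Longrightarrow> a' \<noteq> c \<Longrightarrow> a \<in> S \<longleftrightarrow> a' \<in> S"
    using parent_forest_separation[OF par_le _ arrows \<open>b \<noteq> b'\<close>] by metis
  have side: "(k, c) \<in> E\<^sup>+ \<Longrightarrow> k \<in> S \<longleftrightarrow> u \<in> S" if "(u, k) \<in> E\<^sup>*" for k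
    using that
  proof (induction rule: rtrancl_induct)
    case (step k k')
    then have "(k, c) \<in> E\<^sup>+" "k \<noteq> c" "k' \<noteq> c"
      using acyc by (auto simp: acyclic_def dest: trancl_into_trancl2)
    with step sep show ?case
      by blast
  qed simp
  show False
    using side[OF paths(1)] side[OF paths(2)] arrows S by blast
qed

lemma oriented_edges_memD:
  "(a, b) \<in> oriented_edges \<sigma> es \<Longrightarrow> (a, b) \<in> set es \<or> (b, a) \<in> set es"
  by (auto simp: oriented_edges_def orient_def split: if_splits)

lemma oriented_edges_subset:
  "set es \<subseteq> V \<times> V \<Longrightarrow> oriented_edges \<sigma> es \<subseteq> V \<times> V"
  by (auto dest: oriented_edges_memD)

lemma sum_oriented_edges:
  fixes z :: "nat \<Rightarrow> 'a::comm_semiring_1"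
  assumes less: "\<forall>(a, b)\<in>set es. a < b" and dist: "distinct (map snd es)"
  shows "(\<Sum>(a, b)\<in>oriented_edges \<sigma> es. z a * z b) = (\<Sum>(a, b)\<leftarrow>es. z a * z b)"
proof -
  let ?e = "\<lambda>k. orient (\<sigma> k) (es ! k)"
  have "max (fst (?e k)) (snd (?e k)) = snd (es ! k)" if "k < length es" for k
  proof -
    have "fst (es ! k) < snd (es ! k)"
      using less nth_mem[OF that] by (cases "es ! k") auto
    then show ?thesis
      by (simp add: orient_def)
  qed
  then have inj: "inj_on ?e {..<length es}"
    using dist by (intro inj_onI) (metis lessThan_iff length_map nth_eq_iff_index_eq nth_map)
  have "oriented_edges \<sigma> es = ?e ` {..<length es}"
    by (auto simp: oriented_edges_def)
  then have "(\<Sum>(a, b)\<in>oriented_edges \<sigma> es. z a * z b) = (\<Sum>k<length es. z (fst (?e k)) * z (snd (?e k)))"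
    by (simp add: sum.reindex[OF inj] split_def)
  also have "\<dots> = (\<Sum>k<length es. z (fst (es ! k)) * z (snd (es ! k)))"
    by (intro sum.cong refl) (auto simp: orient_def mult.commute)
  also have "\<dots> = (\<Sum>(a, b)\<leftarrow>es. z a * z b)"
    by (simp add: sum_list_sum_nth atLeast0LessThan split_def)
  finally show ?thesis .
qed

lemma reach_form_oriented_forest:
  fixes z :: "nat \<Rightarrow> real"
  assumes fin: "finite V" and es_V: "set es \<subseteq> V \<times> V" and less: "\<forall>(a, b)\<in>set es. a < b"
    and dist: "distinct (map snd es)" and acyc: "acyclic (oriented_edges \<sigma> es)"
  obtains y where "reach_form V (oriented_edges \<sigma> es) y = (\<Sum>a\<in>V. z a * z a) - (\<Sum>(a, b)\<leftarrow>es. z a * z b)"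
proof -
  let ?E = "oriented_edges \<sigma> es"
  txt \<open>The parent of \<open>b\<close> is its unique smaller neighbour; roots are their own parents.\<close>
  define par where "par b = (case map_of (map prod.swap es) b of None \<Rightarrow> b | Some a \<Rightarrow> a)" for b
  have par_edge: "par b = a" if "(a, b) \<in> set es" for a b
  proof -
    have "map_of (map prod.swap es) b = Some a"
      using dist that by (intro map_of_is_SomeI) (auto simp: comp_def)
    then show ?thesis
      by (simp add: par_def)
  qed
  have par_le: "par v \<le> v" for v
  proof (cases "map_of (map prod.swap es) v")
    case (Some a)
    then have "(v, a) \<in> set (map prod.swap es)"
      by (rule map_of_SomeD)
    then show ?thesis
      using less Some by (auto simp: par_def)
  qed (simp add: par_def)
  have edge: "a = par b \<or> b = par a" if "(a, b) \<in> ?E" for a b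
    using oriented_edges_memD[OF that] par_edge by blast
  have "reach_form V ?E (\<lambda>b. z b - (\<Sum>c\<in>?E `` {b}. z c)) =
      (\<Sum>a\<in>V. z a * z a) - (\<Sum>(a, c)\<in>?E. z a * z c)"
    using parent_forest_unique_paths[OF par_le edge acyc]
    by (rule reach_form_mobius_substitution[OF fin oriented_edges_subset[OF es_V] acyc])
  then show ?thesis
    unfolding sum_oriented_edges[OF less dist] by (rule that)
qed

text \<open>Acyclicity comes for free for Hasse digraphs, and the tree argument needs it.\<close>

definition indefinite_digraph :: "digraph \<Rightarrow> bool" where
  "indefinite_digraph D \<longleftrightarrow> snd D \<subseteq> fst D \<times> fst D \<and>
     (acyclic (snd D) \<longrightarrow> (\<exists>y. reach_form (fst D) (snd D) y < 0))"

lemma indefinite_digraphI: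
  "reach_form V E y < 0 \<Longrightarrow> E \<subseteq> V \<times> V \<Longrightarrow> indefinite_digraph (V, E)"
  by (auto simp: indefinite_digraph_def)

lemma indefinite_poset_if_hasse_iso:
  assumes po: "partial_order_on {1..n} r" and iso: "digraph_iso D (hasse n r)"
    and D: "indefinite_digraph D"
  shows "indefinite_poset n r"
proof (cases D)
  case (Pair V E)
  with D have E: "E \<subseteq> V \<times> V"
    by (simp add: indefinite_digraph_def)
  with po iso Pair have "acyclic E"
    using acyclic_if_digraph_iso_hasse by blast
  with D Pair obtain y where "reach_form V E y < 0"
    by (auto simp: indefinite_digraph_def)
  with po iso Pair E show ?thesis
    using indefinite_poset_if_reach_form_neg by blast
qed

lemma indefinite_digraph_oriented_forest:
  fixes z :: "nat \<Rightarrow> real"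
  assumes fin: "finite V" and es_V: "set es \<subseteq> V \<times> V" and less: "\<forall>(a, b)\<in>set es. a < b"
    and dist: "distinct (map snd es)"
    and neg: "(\<Sum>a\<in>V. z a * z a) - (\<Sum>(a, b)\<leftarrow>es. z a * z b) < 0"
  shows "indefinite_digraph (V, oriented_edges \<sigma> es)"
proof -
  have "\<exists>y. reach_form V (oriented_edges \<sigma> es) y < 0" if acyc: "acyclic (oriented_edges \<sigma> es)"
  proof -
    obtain y where "reach_form V (oriented_edges \<sigma> es) y =
        (\<Sum>a\<in>V. z a * z a) - (\<Sum>(a, b)\<leftarrow>es. z a * z b)"
      by (rule reach_form_oriented_forest[OF fin es_V less dist acyc])
    with neg show ?thesis
      by (intro exI[of _ y]) simp
  qed
  then show ?thesis
    using oriented_edges_subset[OF es_V] by (simp add: indefinite_digraph_def)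
qed

lemma indefinite_digraph_F3: "indefinite_digraph (F3 \<sigma>)"
  unfolding F3_def
  by (rule indefinite_digraph_oriented_forest[where z = "(!) [8, 6, 4, 2, 1, 6, 4, 2, 4]"])
    (simp_all add: atLeast0AtMost atMost_nat_numeral)

lemma indefinite_digraph_F4: "indefinite_digraph (F4 \<sigma>)"
  unfolding F4_def
  by (rule indefinite_digraph_oriented_forest[where z = "(!) [12, 10, 8, 6, 4, 2, 1, 8, 4, 6]"])
    (simp_all add: atLeast0AtMost atMost_nat_numeral)

lemma rtrancl_chain8: "(i, j) \<in> chain8\<^sup>* \<longleftrightarrow> i = j \<or> i \<le> j \<and> j \<le> 7"
proof
  assume "(i, j) \<in> chain8\<^sup>*"
  then show "i = j \<or> i \<le> j \<and> j \<le> 7"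
    by induction (auto simp: chain8_def)
next
  have "(i, j) \<in> chain8\<^sup>*" if "i \<le> j" "j \<le> 7" for j
    using that
  proof (induction j)
    case (Suc j)
    then show ?case
      by (cases "i = Suc j") (auto simp: chain8_def le_Suc_eq intro: rtrancl_into_rtrancl)
  qed simp
  then show "i = j \<or> i \<le> j \<and> j \<le> 7 \<Longrightarrow> (i, j) \<in> chain8\<^sup>*"
    by auto
qed

lemmas reach_form_eval =
  reach_form_def rtrancl_insert rtrancl_chain8 atLeast0AtMost atMost_nat_numeral

lemma indefinite_digraph_F1: "indefinite_digraph (F1 b)"
proof -
  have "indefinite_digraph (F1 True)"
    unfolding F1_def orient_def
    by (rule indefinite_digraphI[where y = "(!) [-15, -19, 17, 13, 8]"]) (simp add: reach_form_eval, auto)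
  moreover have "indefinite_digraph (F1 False)"
    unfolding F1_def orient_def
    by (rule indefinite_digraphI[where y = "(!) [15, 11, -17, -13, 8]"]) (simp add: reach_form_eval, auto)
  ultimately show ?thesis
    by (cases b) simp_all
qed

lemma indefinite_digraph_F2: "indefinite_digraph (F2 b)"
proof -
  have "indefinite_digraph (F2 True)"
    unfolding F2_def orient_def
    by (rule indefinite_digraphI[where y = "(!) [-2, -2, 2, 1, 1]"]) (simp add: reach_form_eval, auto)
  moreover have "indefinite_digraph (F2 False)"
    unfolding F2_def orient_def
    by (rule indefinite_digraphI[where y = "(!) [2, 2, -2, -2, 1]"]) (simp add: reach_form_eval, auto)
  ultimately show ?thesis
    by (cases b) simp_all
qed

lemma indefinite_digraph_F5: "indefinite_digraph (F5 b)"
proof -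
  have "indefinite_digraph (F5 True)"
    unfolding F5_def orient_def
    by (rule indefinite_digraphI[where y = "(!) [5, -2, -2, -2, -2, -2, -2, 5, -7, 4]"])
      (simp add: reach_form_eval, auto simp: chain8_def)
  moreover have "indefinite_digraph (F5 False)"
    unfolding F5_def orient_def
    by (rule indefinite_digraphI[where y = "(!) [-5, 2, 2, 2, 2, 2, 2, -9, 7, 4]"])
      (simp add: reach_form_eval, auto simp: chain8_def)
  ultimately show ?thesis
    by (cases b) simp_all
qed

lemma indefinite_digraph_F6: "indefinite_digraph (F6 b)"
proof -
  have "indefinite_digraph (F6 True)"
    unfolding F6_def orient_def
    by (rule indefinite_digraphI[where y = "(!) [-9, 2, 2, 2, 2, 2, 2, -5, 7, 4]"])
      (simp add: reach_form_eval, auto simp: chain8_def)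
  moreover have "indefinite_digraph (F6 False)"
    unfolding F6_def orient_def
    by (rule indefinite_digraphI[where y = "(!) [5, -2, -2, -2, -2, -2, -2, 5, -7, 4]"])
      (simp add: reach_form_eval, auto simp: chain8_def)
  ultimately show ?thesis
    by (cases b) simp_all
qed

lemma indefinite_digraph_F7: "indefinite_digraph F7"
  unfolding F7_def
  by (rule indefinite_digraphI[where y = "(!) [-7, 2, 2, 2, 2, 2, 2, -7, 5, 4]"])
    (simp add: reach_form_eval, auto simp: chain8_def)

theorem lemma4p3:
  fixes n :: nat and r :: "(nat \<times> nat) set"
  assumes "partial_order_on {1..n} r"
    and "(\<exists>b. digraph_iso (F1 b) (hasse n r)) \<or> (\<exists>b. digraph_iso (F2 b) (hasse n r)) \<or>
         (\<exists>\<sigma>. digraph_iso (F3 \<sigma>) (hasse n r)) \<or> (\<exists>\<sigma>. digraph_iso (F4 \<sigma>) (hasse n r)) \<or>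
         (\<exists>b. digraph_iso (F5 b) (hasse n r)) \<or> (\<exists>b. digraph_iso (F6 b) (hasse n r)) \<or>
         digraph_iso F7 (hasse n r)"
  shows "indefinite_poset n r"
proof -
  obtain D where "digraph_iso D (hasse n r)" and "indefinite_digraph D"
    using assms(2) indefinite_digraph_F1 indefinite_digraph_F2 indefinite_digraph_F3
      indefinite_digraph_F4 indefinite_digraph_F5 indefinite_digraph_F6 indefinite_digraph_F7
    by blast
  then show ?thesis
    by (rule indefinite_poset_if_hasse_iso[OF assms(1)])
qed

end
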